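(* For every $t_0>-(\mu-1)$ there exists $\gamma(t_0)>0$ such that for all $N\in\mathbb N$ and all $t>-(\mu-1)$, $\frac{Z_N(t)}{Z_N(t_0)}\geq e^{-\gamma(t_0)|t-t_0|/2}$.
   Context: Fix $\mu>1$. For $N\in\mathbb N$ let $K_N$ be the periodic discrete Laplacian $(K_Nx)_k=\frac{\mu}{4\sin^2(\pi/N)}(2x_k-x_{k+1}-x_{k-1})$ (indices mod $N$). Let $A$ be an $N\times(N-1)$ matrix whose columns form an orthonormal basis of $\{x\in\mathbb R^N:\sum_kx_k=0\}$. For $y\in\mathbb R^{N-1}$ let $P_2(y)=\sum_{k=1}^N(Ay)_k^2$ and $Q(y)=\langle Ay,K_NAy\rangle-P_2(y)$. For $t>-(\mu-1)$ let $Z_N(t)=\int_{\mathbb R^{N-1}}e^{-\frac{tP_2(y)+Q(y)}{2N}}dy$. *)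

theory Defs
  imports "HOL-Analysis.Analysis"
begin

text \<open>Vectors in R^N are functions nat \<Rightarrow> real used on indices k < N;
  an N x (N-1) matrix A is a function nat \<Rightarrow> nat \<Rightarrow> real, entry A k j
  for k < N, j < N - 1.\<close>

definition KN :: "real \<Rightarrow> nat \<Rightarrow> (nat \<Rightarrow> real) \<Rightarrow> nat \<Rightarrow> real" where
  "KN \<mu> N x k = \<mu> / (4 * (sin (pi / real N))^2) *
      (2 * x k - x ((k + 1) mod N) - x ((k + N - 1) mod N))"

definition onb_sum_zero :: "nat \<Rightarrow> (nat \<Rightarrow> nat \<Rightarrow> real) \<Rightarrow> bool" where
  "onb_sum_zero N A \<longleftrightarrow>
     (\<forall>j < N - 1. (\<Sum>k<N. A k j) = 0) \<and>
     (\<forall>i < N - 1. \<forall>j < N - 1. (\<Sum>k<N. A k i * A k j) = (if i = j then 1 else 0)) \<and>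
     (\<forall>x :: nat \<Rightarrow> real. (\<Sum>k<N. x k) = 0 \<longrightarrow>
        (\<exists>c :: nat \<Rightarrow> real. \<forall>k<N. x k = (\<Sum>j<N - 1. c j * A k j)))"

definition matvec :: "nat \<Rightarrow> (nat \<Rightarrow> nat \<Rightarrow> real) \<Rightarrow> (nat \<Rightarrow> real) \<Rightarrow> nat \<Rightarrow> real" where
  "matvec N A y k = (\<Sum>j<N - 1. A k j * y j)"

definition P2 :: "nat \<Rightarrow> (nat \<Rightarrow> nat \<Rightarrow> real) \<Rightarrow> (nat \<Rightarrow> real) \<Rightarrow> real" where
  "P2 N A y = (\<Sum>k<N. (matvec N A y k)^2)"

definition Qf :: "real \<Rightarrow> nat \<Rightarrow> (nat \<Rightarrow> nat \<Rightarrow> real) \<Rightarrow> (nat \<Rightarrow> real) \<Rightarrow> real" where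
  "Qf \<mu> N A y = (\<Sum>k<N. matvec N A y k * KN \<mu> N (matvec N A y) k) - P2 N A y"

definition ZN :: "real \<Rightarrow> nat \<Rightarrow> (nat \<Rightarrow> nat \<Rightarrow> real) \<Rightarrow> real \<Rightarrow> real" where
  "ZN \<mu> N A t = (\<integral>y. exp (- (t * P2 N A y + Qf \<mu> N A y) / (2 * real N))
                    \<partial>(PiM {..<N - 1} (\<lambda>_. lborel)))"

end

theory Submission
  imports Defs "HOL-Library.Real_Mod" "Jordan_Normal_Form.Determinant" "HOL-Probability.Distributions"
begin

(* The Hartley vectors cas (2 pi k j / N) / sqrt N, cas = cos + sin, form an orthonormal eigenbasis
   of the periodic Laplacian with eigenvalues 4 sin^2 (pi k / N). The constant mode k = 0 is
   orthogonal to the range of A, so in coordinates c = W y with W orthogonal,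
   t P2 + Q = sum_{k=1}^{N-1} (t - 1 + lambda_k) c_k^2,  lambda_k = mu sin^2 (pi k / N) / sin^2 (pi / N) >= mu,
   and the Gaussian integral gives Z_N(t) = sqrt ((2 pi N)^(N-1) / prod_k (t - 1 + lambda_k)).
   By 1 + x <= exp x every factor of Z_N(t) / Z_N(t0) is at least
   exp (- |t - t0| / (2 (t0 - 1 + lambda_k))), and sum_k 1 / lambda_k <= 16 / mu uniformly in N
   because sin x >= x / 2 on [0, pi / 2] and sum_k 1 / k^2 <= 2. *)

section \<open>The discrete Hartley transform\<close>

lemma sum_cis_multiples:
  fixes m :: int
  assumes N: "N > 0"
  shows "(\<Sum>j<N. cis (2 * pi * real_of_int m * real j / real N)) = (if int N dvd m then of_nat N else 0)"
proof -
  define z where "z = cis (2 * pi * real_of_int m / real N)"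
  have powers: "cis (2 * pi * real_of_int m * real j / real N) = z ^ j" for j
    by (simp add: z_def Complex.DeMoivre mult_ac)
  show ?thesis
  proof (cases "int N dvd m")
    case True
    then obtain q where "m = int N * q" by (auto simp: dvd_def)
    then have "2 * pi * real_of_int m / real N = 2 * pi * real_of_int q" using N by simp
    then have "z = 1" by (simp add: z_def)
    then show ?thesis using True by (simp add: powers)
  next
    case False
    have "z \<noteq> 1"
    proof
      assume "z = 1"
      then obtain q where "2 * pi * real_of_int m / real N = real_of_int q * (2 * pi)"
        by (auto simp: z_def cis_eq_1_iff)
      then have "real_of_int m = real_of_int (int N * q)" using N by (simp add: field_simps)
      then show False using False by (metis dvd_triv_left of_int_eq_iff)
    qed
    moreover have "z ^ N = 1"
      using N by (simp add: z_def Complex.DeMoivre)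
    ultimately show ?thesis using False by (simp add: powers geometric_sum)
  qed
qed

lemma
  fixes m :: int
  assumes "N > 0"
  shows sum_cos_multiples: "(\<Sum>j<N. cos (2 * pi * real_of_int m * real j / real N)) = (if int N dvd m then real N else 0)"
    and sum_sin_multiples: "(\<Sum>j<N. sin (2 * pi * real_of_int m * real j / real N)) = 0"
  using arg_cong[OF sum_cis_multiples[OF assms, of m], of Re]
    arg_cong[OF sum_cis_multiples[OF assms, of m], of Im]
  by (simp_all split: if_splits)

definition cas :: "real \<Rightarrow> real" where
  "cas x = cos x + sin x"

lemma cas_mult: "cas a * cas b = cos (a - b) + sin (a + b)"
  by (simp add: cas_def cos_diff sin_add algebra_simps)

lemma cas_add_2pi_multiple: "cas (x + real_of_int i * (2 * pi)) = cas x"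
  by (simp add: cas_def sin_add cos_add mult.commute[of _ "2 * pi"])

lemma cas_add_diff: "cas (x + y) + cas (x - y) = 2 * cos y * cas x"
  by (simp add: cas_def sin_add sin_diff cos_add cos_diff algebra_simps)

definition hartley :: "nat \<Rightarrow> nat \<Rightarrow> nat \<Rightarrow> real" where
  "hartley N k j = cas (2 * pi * real k * real j / real N) / sqrt (real N)"

lemma hartley_commute: "hartley N k j = hartley N j k"
  by (simp add: hartley_def mult_ac)

lemma hartley_orthonormal:
  assumes N: "N > 0" and "k < N" "l < N"
  shows "(\<Sum>j<N. hartley N k j * hartley N l j) = (if k = l then 1 else 0)"
proof -
  have products: "hartley N k j * hartley N l j = (cos (2 * pi * real_of_int (int k - int l) * real j / real N)
        + sin (2 * pi * real_of_int (int k + int l) * real j / real N)) / real N" for j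
  proof -
    have "hartley N k j * hartley N l j = (cos (2 * pi * real k * real j / real N - 2 * pi * real l * real j / real N)
        + sin (2 * pi * real k * real j / real N + 2 * pi * real l * real j / real N)) / real N"
      using N by (simp add: hartley_def flip: cas_mult)
    then show ?thesis by (simp add: diff_divide_distrib add_divide_distrib algebra_simps)
  qed
  have "(\<Sum>j<N. hartley N k j * hartley N l j) = (if int N dvd int k - int l then 1 else 0)"
    unfolding products sum_divide_distrib[symmetric] sum.distrib sum_cos_multiples[OF N] sum_sin_multiples[OF N]
    using N by simp
  also have "int N dvd int k - int l \<longleftrightarrow> k = l"
    using assms by (simp flip: mod_eq_dvd_iff add: zmod_int)
  finally show ?thesis .
qed

lemma hartley_mod: "N > 0 \<Longrightarrow> hartley N k (p mod N) = hartley N k p"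
proof -
  assume N: "N > 0"
  have "real p = real (p mod N) + real N * real (p div N)"
    by (metis div_mult_mod_eq of_nat_add of_nat_mult mult.commute add.commute)
  then have "2 * pi * real k * real (p mod N) / real N
      = 2 * pi * real k * real p / real N + real_of_int (- int (k * (p div N))) * (2 * pi)"
    using N by (simp add: field_simps)
  then show ?thesis by (simp only: hartley_def cas_add_2pi_multiple)
qed

definition periodic_laplacian :: "nat \<Rightarrow> (nat \<Rightarrow> real) \<Rightarrow> nat \<Rightarrow> real" where
  "periodic_laplacian N x j = 2 * x j - x ((j + 1) mod N) - x ((j + N - 1) mod N)"

lemma periodic_laplacian_cong:
  assumes "N > 0" "j < N" "\<And>i. i < N \<Longrightarrow> x i = y i"
  shows "periodic_laplacian N x j = periodic_laplacian N y j"
  using assms by (simp add: periodic_laplacian_def)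

lemma periodic_laplacian_linear:
  "periodic_laplacian N (\<lambda>i. \<Sum>k\<in>K. c k * f k i) j = (\<Sum>k\<in>K. c k * periodic_laplacian N (f k) j)"
  by (simp add: periodic_laplacian_def sum_subtractf sum_distrib_left right_diff_distrib mult_ac)

lemma hartley_laplacian_eigen:
  assumes N: "N > 0"
  shows "periodic_laplacian N (hartley N k) j = 4 * (sin (pi * real k / real N))^2 * hartley N k j"
proof -
  define \<theta> where "\<theta> = 2 * pi * real k / real N"
  have at_index: "hartley N k i = cas (real i * \<theta>) / sqrt (real N)" for i
    by (simp add: hartley_def \<theta>_def mult_ac)
  have at_succ: "hartley N k ((j + 1) mod N) = cas (real j * \<theta> + \<theta>) / sqrt (real N)"
    unfolding hartley_mod[OF N] at_index by (simp add: algebra_simps)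
  have "real (j + N - 1) * \<theta> = (real j * \<theta> - \<theta>) + real_of_int (int k) * (2 * pi)"
    using N by (simp add: \<theta>_def field_simps of_nat_diff)
  then have at_pred: "hartley N k ((j + N - 1) mod N) = cas (real j * \<theta> - \<theta>) / sqrt (real N)"
    unfolding hartley_mod[OF N] at_index by (simp only: cas_add_2pi_multiple)
  have cos_theta: "cos \<theta> = 1 - 2 * (sin (pi * real k / real N))^2"
    using cos_double_sin[of "pi * real k / real N"] by (simp add: \<theta>_def mult.assoc)
  have "2 * cas (real j * \<theta>) - cas (real j * \<theta> + \<theta>) - cas (real j * \<theta> - \<theta>)
      = 4 * (sin (pi * real k / real N))^2 * cas (real j * \<theta>)"
    using cas_add_diff[of "real j * \<theta>" \<theta>] unfolding cos_theta by (simp add: algebra_simps)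
  then show ?thesis
    unfolding periodic_laplacian_def at_succ at_pred by (simp add: at_index diff_divide_distrib[symmetric])
qed

definition hartley_coeff :: "nat \<Rightarrow> (nat \<Rightarrow> real) \<Rightarrow> nat \<Rightarrow> real" where
  "hartley_coeff N x k = (\<Sum>j<N. hartley N k j * x j)"

lemma hartley_coeff_0: "hartley_coeff N x 0 = (\<Sum>j<N. x j) / sqrt (real N)"
  by (simp add: hartley_coeff_def hartley_def cas_def sum_divide_distrib)

lemma hartley_inversion:
  assumes N: "N > 0" and i: "i < N"
  shows "x i = (\<Sum>k<N. hartley_coeff N x k * hartley N k i)"
proof -
  have "(\<Sum>k<N. hartley_coeff N x k * hartley N k i) = (\<Sum>j<N. x j * (\<Sum>k<N. hartley N j k * hartley N i k))"
    unfolding hartley_coeff_def sum_distrib_left sum_distrib_right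
    by (subst sum.swap) (simp add: hartley_commute mult_ac)
  also have "\<dots> = (\<Sum>j<N. x j * (if j = i then 1 else 0))"
    by (intro sum.cong refl) (simp add: hartley_orthonormal[OF N _ i])
  also have "\<dots> = x i" using i by (simp add: if_distrib cong: if_cong)
  finally show ?thesis by simp
qed

lemma hartley_parseval:
  assumes N: "N > 0"
  shows "(\<Sum>j<N. x j * z j) = (\<Sum>k<N. hartley_coeff N x k * hartley_coeff N z k)"
proof -
  have "(\<Sum>j<N. x j * z j) = (\<Sum>j<N. x j * (\<Sum>k<N. hartley_coeff N z k * hartley N k j))"
    by (intro sum.cong refl) (simp flip: hartley_inversion[OF N])
  also have "\<dots> = (\<Sum>k<N. hartley_coeff N z k * (\<Sum>j<N. hartley N k j * x j))"
    by (simp add: sum_distrib_left sum_distrib_right mult_ac) (rule sum.swap)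
  finally show ?thesis by (simp add: hartley_coeff_def mult_ac)
qed

lemma hartley_laplacian_form:
  assumes N: "N > 0"
  shows "(\<Sum>j<N. x j * periodic_laplacian N x j)
       = (\<Sum>k<N. 4 * (sin (pi * real k / real N))^2 * (hartley_coeff N x k)^2)"
proof -
  define c where "c = hartley_coeff N x"
  have "periodic_laplacian N x j = (\<Sum>k<N. c k * 4 * (sin (pi * real k / real N))^2 * hartley N k j)"
    if "j < N" for j
  proof -
    have "periodic_laplacian N x j = periodic_laplacian N (\<lambda>i. \<Sum>k<N. c k * hartley N k i) j"
      using N that by (intro periodic_laplacian_cong) (simp_all add: c_def flip: hartley_inversion)
    then show ?thesis
      by (simp add: periodic_laplacian_linear hartley_laplacian_eigen[OF N] mult_ac)
  qed
  then have "(\<Sum>j<N. x j * periodic_laplacian N x j)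
      = (\<Sum>k<N. c k * 4 * (sin (pi * real k / real N))^2 * (\<Sum>j<N. hartley N k j * x j))"
    by (simp add: sum_distrib_left sum_distrib_right mult_ac) (rule sum.swap)
  then show ?thesis by (simp add: c_def hartley_coeff_def power2_eq_square mult_ac)
qed

section \<open>Gaussian integrals of positive definite quadratic forms\<close>

definition quad_form :: "nat \<Rightarrow> (nat \<Rightarrow> nat \<Rightarrow> real) \<Rightarrow> (nat \<Rightarrow> real) \<Rightarrow> real" where
  "quad_form n M y = (\<Sum>i<n. \<Sum>j<n. y i * M i j * y j)"

definition pos_def :: "nat \<Rightarrow> (nat \<Rightarrow> nat \<Rightarrow> real) \<Rightarrow> bool" where
  "pos_def n M \<longleftrightarrow> (\<forall>i<n. \<forall>j<n. M i j = M j i) \<and> (\<forall>y. (\<exists>i<n. y i \<noteq> 0) \<longrightarrow> 0 < quad_form n M y)"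

definition mat_det :: "nat \<Rightarrow> (nat \<Rightarrow> nat \<Rightarrow> real) \<Rightarrow> real" where
  "mat_det n M = Determinant.det (Matrix.mat n n (\<lambda>(i, j). M i j))"

definition schur_compl :: "nat \<Rightarrow> (nat \<Rightarrow> nat \<Rightarrow> real) \<Rightarrow> nat \<Rightarrow> nat \<Rightarrow> real" where
  "schur_compl n M i j = M i j - M i n * M n j / M n n"

lemma quad_form_upd_last:
  assumes sym: "\<forall>i<n. M i n = M n i"
  shows "quad_form (Suc n) M (y(n := u)) = quad_form n M y + 2 * u * (\<Sum>i<n. M n i * y i) + M n n * u^2"
proof -
  let ?y = "y(n := u)"
  have same: "?y i = y i" if "i < n" for i
    using that by simp
  have "quad_form (Suc n) M ?y = quad_form n M ?y + (\<Sum>i<n. ?y i * M i n * u)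
      + (\<Sum>j<n. u * M n j * ?y j) + M n n * u^2"
    by (simp add: quad_form_def sum.distrib power2_eq_square mult_ac)
  also have "quad_form n M ?y = quad_form n M y"
    unfolding quad_form_def by (intro sum.cong refl) (simp add: same)
  also have "(\<Sum>i<n. ?y i * M i n * u) = u * (\<Sum>i<n. M n i * y i)"
    using sym by (simp add: same sum_distrib_left mult_ac)
  also have "(\<Sum>j<n. u * M n j * ?y j) = u * (\<Sum>i<n. M n i * y i)"
    by (simp add: same sum_distrib_left mult_ac)
  finally show ?thesis by (simp only: mult.assoc ac_simps)
qed

lemma quad_form_schur_compl:
  assumes sym: "\<forall>i<n. M i n = M n i"
  shows "quad_form n (schur_compl n M) y = quad_form n M y - (\<Sum>i<n. M n i * y i)^2 / M n n"
proof -
  have "quad_form n (schur_compl n M) y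
      = (\<Sum>i<n. \<Sum>j<n. y i * M i j * y j - (M n i * y i) * (M n j * y j) / M n n)"
    unfolding quad_form_def schur_compl_def using sym by (intro sum.cong refl) (simp add: algebra_simps)
  also have "\<dots> = quad_form n M y - (\<Sum>i<n. \<Sum>j<n. (M n i * y i) * (M n j * y j)) / M n n"
    by (simp add: quad_form_def sum_subtractf sum_divide_distrib)
  finally show ?thesis by (simp add: power2_eq_square sum_product)
qed

lemma pos_def_last_diag_pos:
  assumes "pos_def (Suc n) M"
  shows "0 < M n n"
proof -
  have "0 < quad_form (Suc n) M ((\<lambda>_. 0)(n := 1))"
    using assms unfolding pos_def_def by (metis fun_upd_same lessI zero_neq_one)
  also have "quad_form (Suc n) M ((\<lambda>_. 0)(n := 1)) = M n n"
    using assms by (subst quad_form_upd_last) (auto simp: pos_def_def quad_form_def)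
  finally show ?thesis .
qed

lemma pos_def_schur_compl:
  assumes pd: "pos_def (Suc n) M"
  shows "pos_def n (schur_compl n M)"
  unfolding pos_def_def
proof (intro conjI allI impI)
  fix i j assume "i < n" "j < n"
  then show "schur_compl n M i j = schur_compl n M j i"
    using pd by (simp add: pos_def_def schur_compl_def)
next
  fix y :: "nat \<Rightarrow> real" assume "\<exists>i<n. y i \<noteq> 0"
  define a where "a = M n n"
  define b where "b = (\<Sum>i<n. M n i * y i)"
  have sym: "\<forall>i<n. M i n = M n i" using pd by (simp add: pos_def_def)
  have a: "0 < a" unfolding a_def by (rule pos_def_last_diag_pos[OF pd])
  \<comment> \<open>\<open>- b / a\<close> minimises the form in the last coordinate\<close>
  have "0 < quad_form (Suc n) M (y(n := - b / a))"
    using pd \<open>\<exists>i<n. y i \<noteq> 0\<close> unfolding pos_def_def by (metis fun_upd_other less_Suc_eq less_irrefl)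
  also have "quad_form (Suc n) M (y(n := - b / a)) = quad_form n (schur_compl n M) y"
    using a unfolding quad_form_upd_last[OF sym] quad_form_schur_compl[OF sym] a_def[symmetric] b_def[symmetric]
    by (simp add: field_simps power2_eq_square)
  finally show "0 < quad_form n (schur_compl n M) y" .
qed

lemma mat_det_schur_compl:
  assumes a: "M n n \<noteq> 0"
  shows "mat_det (Suc n) M = M n n * mat_det n (schur_compl n M)"
proof -
  define A where "A = Matrix.mat (Suc n) (Suc n) (\<lambda>(i, j). M i j)"
  \<comment> \<open>\<open>E\<close> subtracts multiples of the last column so that the last row becomes \<open>(0, \<dots>, 0, M n n)\<close>\<close>
  define E where "E = Matrix.mat (Suc n) (Suc n)
    (\<lambda>(i, j). if i = j then 1 else if i = n then - M n j / M n n else 0)"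
  define B where "B = four_block_mat (Matrix.mat n n (\<lambda>(i, j). schur_compl n M i j))
    (Matrix.mat n 1 (\<lambda>(i, j). M i n)) (0\<^sub>m 1 n) (Matrix.mat 1 1 (\<lambda>_. M n n))"
  have carrier: "A \<in> carrier_mat (Suc n) (Suc n)" "E \<in> carrier_mat (Suc n) (Suc n)"
    by (simp_all add: A_def E_def)
  have AE: "A * E = B"
  proof (rule eq_matI)
    fix i j assume i: "i < dim_row B" and j: "j < dim_col B"
    then have i': "i < Suc n" and j': "j < Suc n" by (simp_all add: B_def)
    have "(A * E) $$ (i, j) = (\<Sum>k<Suc n. M i k * (if k = j then 1 else if k = n then - M n j / M n n else 0))"
      using i' j' by (simp add: A_def E_def scalar_prod_def atLeast0LessThan)
    also have "\<dots> = (if j = n then M i n else M i j + M i n * (- M n j / M n n))"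
      using j' by (auto simp: if_distrib sum.delta' less_Suc_eq cong: if_cong)
    also have "\<dots> = B $$ (i, j)"
      using i' j' a by (cases "i < n") (auto simp: B_def schur_compl_def field_simps less_Suc_eq)
    finally show "(A * E) $$ (i, j) = B $$ (i, j)" .
  qed (simp_all add: A_def E_def B_def)
  have "Determinant.det E = prod_list (diag_mat E)"
    by (rule det_lower_triangular[of "Suc n"]) (auto simp: E_def)
  also have "diag_mat E = map (\<lambda>i. 1) [0..<Suc n]"
    unfolding diag_mat_def by (intro map_cong) (auto simp: E_def)
  finally have det_E: "Determinant.det E = 1" by (simp add: map_replicate_const)
  have det_B: "Determinant.det B = mat_det n (schur_compl n M) * M n n"
    unfolding B_def mat_det_def
    by (subst det_four_block_mat_lower_left_zero[of _ n _ 1]) (auto simp: det_single)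
  have "mat_det (Suc n) M = Determinant.det (A * E)"
    using det_mult[OF carrier] det_E by (simp add: mat_det_def A_def)
  then show ?thesis using AE det_B by simp
qed

lemma quad_form_measurable [measurable]:
  assumes "{..<n} \<subseteq> I"
  shows "quad_form n M \<in> borel_measurable (PiM I (\<lambda>_. lborel :: real measure))"
  using assms unfolding quad_form_def by (intro borel_measurable_sum borel_measurable_times) auto

lemma nn_integral_gaussian_complete_square:
  assumes a: "a > 0"
  shows "(\<integral>\<^sup>+u. ennreal (exp (- (q + 2 * u * b + a * u^2) / 2)) \<partial>lborel)
       = ennreal (exp (- (q - b^2 / a) / 2) * sqrt (2 * pi / a))"
proof -
  define c where "c = exp (- (q - b^2 / a) / 2) * sqrt (2 * pi / a)"
  have c0: "c \<ge> 0" using a by (simp add: c_def)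
  have density: "exp (- (q + 2 * u * b + a * u^2) / 2) = c * normal_density (- b / a) (1 / sqrt a) u" for u
  proof -
    have "normal_density (- b / a) (1 / sqrt a) u = exp (- (((u + b / a)^2) * a) / 2) / sqrt (2 * pi / a)"
      unfolding normal_density_def using a by (simp add: power_divide field_simps)
    then have "c * normal_density (- b / a) (1 / sqrt a) u
        = exp (- (q - b^2 / a) / 2) * exp (- (((u + b / a)^2) * a) / 2)"
      using a by (simp add: c_def)
    also have "\<dots> = exp (- (q + 2 * u * b + a * u^2) / 2)"
      unfolding exp_add[symmetric] using a by (simp add: field_simps power2_eq_square)
    finally show ?thesis by simp
  qed
  have "(\<integral>\<^sup>+u. ennreal (exp (- (q + 2 * u * b + a * u^2) / 2)) \<partial>lborel)
      = ennreal c * (\<integral>\<^sup>+u. ennreal (normal_density (- b / a) (1 / sqrt a) u) \<partial>lborel)"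
    unfolding density using c0
    by (subst nn_integral_cmult[symmetric]) (auto simp: ennreal_mult' intro!: nn_integral_cong)
  also have "(\<integral>\<^sup>+u. ennreal (normal_density (- b / a) (1 / sqrt a) u) \<partial>lborel) = 1"
    using a by (subst nn_integral_eq_integral)
      (auto simp: integrable_normal_density integral_normal_density normal_density_nonneg)
  finally show ?thesis by (simp add: c_def)
qed

lemma pos_def_mat_det_pos: "pos_def n M \<Longrightarrow> 0 < mat_det n M"
proof (induction n arbitrary: M)
  case 0
  then show ?case by (simp add: mat_det_def)
next
  case (Suc n)
  then show ?case
    using pos_def_last_diag_pos[OF Suc.prems] Suc.IH[OF pos_def_schur_compl[OF Suc.prems]]
    by (simp add: mat_det_schur_compl)
qed

theorem nn_integral_gaussian_quad_form:
  "pos_def n M \<Longrightarrow>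
     (\<integral>\<^sup>+y. ennreal (exp (- quad_form n M y / 2)) \<partial>PiM {..<n} (\<lambda>_. lborel))
       = ennreal (sqrt ((2 * pi)^n / mat_det n M))"
proof (induction n arbitrary: M)
  case 0
  then show ?case by (simp add: PiM_empty quad_form_def mat_det_def)
next
  case (Suc n)
  interpret product_sigma_finite "\<lambda>_::nat. lborel :: real measure" by standard
  have sym: "\<forall>i<n. M i n = M n i" using Suc.prems by (simp add: pos_def_def)
  define a where "a = M n n"
  define b where "b y = (\<Sum>i<n. M n i * y i)" for y
  define S where "S = schur_compl n M"
  have a: "a > 0" unfolding a_def by (rule pos_def_last_diag_pos[OF Suc.prems])
  have inner: "(\<integral>\<^sup>+u. ennreal (exp (- quad_form (Suc n) M (y(n := u)) / 2)) \<partial>lborel)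
      = ennreal (exp (- quad_form n S y / 2) * sqrt (2 * pi / a))" for y
  proof -
    have "quad_form (Suc n) M (y(n := u)) = quad_form n M y + 2 * u * b y + a * u^2" for u
      by (simp add: quad_form_upd_last[OF sym] a_def b_def)
    then have "(\<integral>\<^sup>+u. ennreal (exp (- quad_form (Suc n) M (y(n := u)) / 2)) \<partial>lborel)
        = ennreal (exp (- (quad_form n M y - (b y)^2 / a) / 2) * sqrt (2 * pi / a))"
      by (simp only: nn_integral_gaussian_complete_square[OF a])
    also have "quad_form n M y - (b y)^2 / a = quad_form n S y"
      by (simp add: S_def quad_form_schur_compl[OF sym] a_def b_def)
    finally show ?thesis .
  qed
  have "{..<Suc n} = insert n {..<n}" by auto
  then have "(\<integral>\<^sup>+y. ennreal (exp (- quad_form (Suc n) M y / 2)) \<partial>PiM {..<Suc n} (\<lambda>_. lborel))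
     = (\<integral>\<^sup>+y. (\<integral>\<^sup>+u. ennreal (exp (- quad_form (Suc n) M (y(n := u)) / 2)) \<partial>lborel)
          \<partial>PiM {..<n} (\<lambda>_. lborel))"
    by (simp only:) (rule product_nn_integral_insert; simp)
  also have "\<dots> = ennreal (sqrt (2 * pi / a)) *
      (\<integral>\<^sup>+y. ennreal (exp (- quad_form n S y / 2)) \<partial>PiM {..<n} (\<lambda>_. lborel))"
    unfolding inner using a
    by (subst nn_integral_cmult[symmetric]) (auto simp: ennreal_mult mult.commute intro!: nn_integral_cong)
  also have "\<dots> = ennreal (sqrt (2 * pi / a) * sqrt ((2 * pi)^n / mat_det n S))"
    using a pos_def_mat_det_pos[OF pos_def_schur_compl[OF Suc.prems]]
    unfolding S_def Suc.IH[OF pos_def_schur_compl[OF Suc.prems]] by (simp add: ennreal_mult)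
  also have "sqrt (2 * pi / a) * sqrt ((2 * pi)^n / mat_det n S) = sqrt ((2 * pi)^(Suc n) / mat_det (Suc n) M)"
    using a by (simp add: S_def a_def mat_det_schur_compl real_sqrt_mult[symmetric] field_simps)
  finally show ?case .
qed

corollary integral_gaussian_quad_form:
  assumes "pos_def n M"
  shows "(\<integral>y. exp (- quad_form n M y / 2) \<partial>PiM {..<n} (\<lambda>_. lborel)) = sqrt ((2 * pi)^n / mat_det n M)"
  using nn_integral_gaussian_quad_form[OF assms] pos_def_mat_det_pos[OF assms]
  by (intro has_bochner_integral_integral_eq has_bochner_integral_nn_integral) auto

definition conj_diag :: "nat \<Rightarrow> (nat \<Rightarrow> nat \<Rightarrow> real) \<Rightarrow> (nat \<Rightarrow> real) \<Rightarrow> nat \<Rightarrow> nat \<Rightarrow> real" where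
  "conj_diag n W d i l = (\<Sum>k<n. W k i * d k * W k l)"

lemma quad_form_conj_diag:
  "quad_form n (conj_diag n W d) y = (\<Sum>k<n. d k * (\<Sum>i<n. W k i * y i)^2)"
proof -
  have "quad_form n (conj_diag n W d) y = (\<Sum>i<n. \<Sum>l<n. \<Sum>k<n. d k * ((W k i * y i) * (W k l * y l)))"
    unfolding quad_form_def conj_diag_def by (simp add: sum_distrib_left sum_distrib_right mult_ac)
  also have "\<dots> = (\<Sum>i<n. \<Sum>k<n. \<Sum>l<n. d k * ((W k i * y i) * (W k l * y l)))"
    by (rule sum.cong[OF refl], rule sum.swap)
  also have "\<dots> = (\<Sum>k<n. \<Sum>i<n. \<Sum>l<n. d k * ((W k i * y i) * (W k l * y l)))"
    by (rule sum.swap)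
  also have "\<dots> = (\<Sum>k<n. d k * (\<Sum>i<n. \<Sum>l<n. (W k i * y i) * (W k l * y l)))"
    by (simp only: sum_distrib_left)
  finally show ?thesis by (simp only: power2_eq_square sum_product)
qed

locale orthogonal_mat =
  fixes n :: nat and W :: "nat \<Rightarrow> nat \<Rightarrow> real"
  assumes columns_orthonormal: "\<And>i l. i < n \<Longrightarrow> l < n \<Longrightarrow> (\<Sum>k<n. W k i * W k l) = (if i = l then 1 else 0)"
begin

lemma sum_sq_mult: "(\<Sum>k<n. (\<Sum>i<n. W k i * y i)^2) = (\<Sum>i<n. (y i)^2)"
proof -
  have "(\<Sum>j<n. y i * conj_diag n W (\<lambda>_. 1) i j * y j) = (y i)^2" if "i < n" for i
  proof -
    have "(\<Sum>j<n. y i * conj_diag n W (\<lambda>_. 1) i j * y j) = (\<Sum>j<n. if i = j then (y i)^2 else 0)"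
      by (rule sum.cong) (auto simp: conj_diag_def columns_orthonormal that power2_eq_square)
    then show ?thesis using that by simp
  qed
  then have "quad_form n (conj_diag n W (\<lambda>_. 1)) y = (\<Sum>i<n. (y i)^2)"
    unfolding quad_form_def by simp
  then show ?thesis by (simp add: quad_form_conj_diag)
qed

lemma pos_def_conj_diag:
  assumes d: "\<And>k. k < n \<Longrightarrow> 0 < d k"
  shows "pos_def n (conj_diag n W d)"
  unfolding pos_def_def
proof (intro conjI allI impI)
  fix i j assume "i < n" "j < n"
  show "conj_diag n W d i j = conj_diag n W d j i" by (simp add: conj_diag_def mult_ac)
next
  fix y :: "nat \<Rightarrow> real" assume "\<exists>i<n. y i \<noteq> 0"
  then obtain i where "i < n" "y i \<noteq> 0" by blast
  then have "0 < (\<Sum>i<n. (y i)^2)" by (intro sum_pos2[of _ i]) auto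
  then have "0 < (\<Sum>k<n. (\<Sum>i<n. W k i * y i)^2)" by (simp only: sum_sq_mult)
  then obtain k where k: "k < n" "(\<Sum>i<n. W k i * y i)^2 \<noteq> 0"
    by (metis (no_types, lifting) less_irrefl lessThan_iff sum.neutral)
  have "0 < (\<Sum>k<n. d k * (\<Sum>i<n. W k i * y i)^2)"
  proof (rule sum_pos2[of _ k])
    show "0 < d k * (\<Sum>i<n. W k i * y i)^2" using k d by simp
    show "0 \<le> d j * (\<Sum>i<n. W j i * y i)^2" if "j \<in> {..<n}" for j
      using d[of j] that by simp
  qed (use k in simp_all)
  then show "0 < quad_form n (conj_diag n W d) y" by (simp add: quad_form_conj_diag)
qed

lemma mat_det_conj_diag: "mat_det n (conj_diag n W d) = (\<Prod>k<n. d k)"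
proof -
  define Wm where "Wm = Matrix.mat n n (\<lambda>(k, i). W k i)"
  define Dm where "Dm = Matrix.mat n n (\<lambda>(k, l). if k = l then d k else 0)"
  have carrier: "Wm \<in> carrier_mat n n" "Dm \<in> carrier_mat n n" "transpose_mat Wm \<in> carrier_mat n n"
    by (simp_all add: Wm_def Dm_def)
  have DW: "(Dm * Wm) $$ (k, l) = d k * W k l" if "k < n" "l < n" for k l
  proof -
    have "(Dm * Wm) $$ (k, l) = (\<Sum>k'<n. (if k = k' then d k else 0) * W k' l)"
      using that by (simp add: Dm_def Wm_def scalar_prod_def atLeast0LessThan)
    also have "\<dots> = (\<Sum>k'<n. if k = k' then d k * W k l else 0)"
      by (rule sum.cong) auto
    also have "\<dots> = d k * W k l"
      using that by simp
    finally show ?thesis .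
  qed
  have "Matrix.mat n n (\<lambda>(i, l). conj_diag n W d i l) = transpose_mat Wm * (Dm * Wm)"
  proof (rule eq_matI)
    fix i l assume "i < dim_row (transpose_mat Wm * (Dm * Wm))" "l < dim_col (transpose_mat Wm * (Dm * Wm))"
    then have i: "i < n" and l: "l < n" by (simp_all add: Wm_def Dm_def)
    have "(transpose_mat Wm * (Dm * Wm)) $$ (i, l) = (\<Sum>k<n. W k i * (Dm * Wm) $$ (k, l))"
      using i l by (simp add: Wm_def Dm_def scalar_prod_def atLeast0LessThan)
    then show "Matrix.mat n n (\<lambda>(i, l). conj_diag n W d i l) $$ (i, l) = (transpose_mat Wm * (Dm * Wm)) $$ (i, l)"
      using i l by (simp add: DW conj_diag_def mult.assoc)
  qed (simp_all add: Wm_def Dm_def)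
  then have "mat_det n (conj_diag n W d) = Determinant.det Dm * (Determinant.det Wm)^2"
    unfolding mat_det_def using carrier by (simp add: det_mult det_transpose power2_eq_square)
  moreover have "transpose_mat Wm * Wm = 1\<^sub>m n"
  proof (rule eq_matI)
    fix i l assume "i < dim_row (1\<^sub>m n :: real mat)" "l < dim_col (1\<^sub>m n :: real mat)"
    then have i: "i < n" and l: "l < n" by simp_all
    have "(transpose_mat Wm * Wm) $$ (i, l) = (\<Sum>k<n. W k i * W k l)"
      using i l by (simp add: Wm_def scalar_prod_def atLeast0LessThan)
    then show "(transpose_mat Wm * Wm) $$ (i, l) = 1\<^sub>m n $$ (i, l)"
      using i l by (simp add: columns_orthonormal)
  qed (simp_all add: Wm_def)
  then have "(Determinant.det Wm)^2 = 1"
    using carrier by (metis det_mult det_one det_transpose power2_eq_square)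
  moreover have "Determinant.det Dm = (\<Prod>k<n. d k)"
    using carrier by (subst det_upper_triangular)
      (auto simp: Dm_def upper_triangular_def prod_list_diag_prod atLeast0LessThan)
  ultimately show ?thesis by simp
qed

end

section \<open>Diagonalisation of the integrand of Z_N\<close>

definition KN_eigenvalue :: "real \<Rightarrow> nat \<Rightarrow> nat \<Rightarrow> real" where
  "KN_eigenvalue \<mu> N m = \<mu> * (sin (pi * real m / real N))^2 / (sin (pi / real N))^2"

lemma KN_eq_periodic_laplacian: "KN \<mu> N x k = \<mu> / (4 * (sin (pi / real N))^2) * periodic_laplacian N x k"
  by (simp add: KN_def periodic_laplacian_def)

locale sum_zero_onb =
  fixes N :: nat and A :: "nat \<Rightarrow> nat \<Rightarrow> real" and n :: nat
  assumes N_eq: "N = Suc n"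
    and onb: "onb_sum_zero N A"
begin

lemma N_pos: "0 < N"
  using N_eq by simp

lemma sum_lessThan_N: "(\<Sum>m<N. f m) = f 0 + (\<Sum>k<n. f (Suc k))"
  unfolding N_eq by (rule sum.lessThan_Suc_shift)

definition W :: "nat \<Rightarrow> nat \<Rightarrow> real" where
  "W k i = hartley_coeff N (\<lambda>j. A j i) (Suc k)"

lemma hartley_coeff_0_column: "i < n \<Longrightarrow> hartley_coeff N (\<lambda>j. A j i) 0 = 0"
  using onb N_eq by (simp add: hartley_coeff_0 onb_sum_zero_def)

sublocale orthogonal_mat n W
proof
  fix i l assume i: "i < n" and l: "l < n"
  have "(\<Sum>k<N. A k i * A k l) = (if i = l then 1 else 0)"
    using onb N_eq i l by (simp add: onb_sum_zero_def)
  then show "(\<Sum>k<n. W k i * W k l) = (if i = l then 1 else 0)"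
    using hartley_parseval[OF N_pos, of "\<lambda>j. A j i" "\<lambda>j. A j l"]
    by (simp add: sum_lessThan_N hartley_coeff_0_column i W_def)
qed

lemma hartley_coeff_matvec:
  "hartley_coeff N (matvec N A y) m = (\<Sum>i<n. hartley_coeff N (\<lambda>j. A j i) m * y i)"
proof -
  have "hartley_coeff N (matvec N A y) m = (\<Sum>j<N. \<Sum>i<n. hartley N m j * A j i * y i)"
    unfolding hartley_coeff_def matvec_def N_eq by (simp add: sum_distrib_left mult_ac)
  also have "\<dots> = (\<Sum>i<n. \<Sum>j<N. hartley N m j * A j i * y i)"
    by (rule sum.swap)
  finally show ?thesis by (simp add: hartley_coeff_def sum_distrib_right)
qed

lemma exponent_diagonal:
  "t * P2 N A y + Qf \<mu> N A y = (\<Sum>k<n. (t - 1 + KN_eigenvalue \<mu> N (Suc k)) * (\<Sum>i<n. W k i * y i)^2)"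
proof -
  define x where "x = matvec N A y"
  define c where "c = hartley_coeff N x"
  have c_0: "c 0 = 0"
    by (simp add: c_def x_def hartley_coeff_matvec hartley_coeff_0_column)
  have c_Suc: "c (Suc k) = (\<Sum>i<n. W k i * y i)" for k
    by (simp add: c_def x_def hartley_coeff_matvec W_def)
  have "P2 N A y = (\<Sum>m<N. (c m)^2)"
    using hartley_parseval[OF N_pos, of x x] by (simp add: P2_def c_def x_def power2_eq_square)
  also have "\<dots> = (\<Sum>k<n. (\<Sum>i<n. W k i * y i)^2)"
    by (simp add: sum_lessThan_N c_0 c_Suc)
  finally have P2: "P2 N A y = \<dots>" .
  have "(\<Sum>k<N. x k * KN \<mu> N x k) = \<mu> / (4 * (sin (pi / real N))^2) * (\<Sum>j<N. x j * periodic_laplacian N x j)"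
    by (simp add: KN_eq_periodic_laplacian sum_distrib_left sum_divide_distrib mult.left_commute)
  also have "\<dots> = (\<Sum>m<N. KN_eigenvalue \<mu> N m * (c m)^2)"
    unfolding hartley_laplacian_form[OF N_pos] c_def KN_eigenvalue_def
    by (simp add: sum_distrib_left field_simps)
  also have "\<dots> = (\<Sum>k<n. KN_eigenvalue \<mu> N (Suc k) * (\<Sum>i<n. W k i * y i)^2)"
    by (simp add: sum_lessThan_N c_0 c_Suc)
  finally show ?thesis
    unfolding Qf_def x_def[symmetric] P2 by (simp add: sum_distrib_left algebra_simps sum.distrib sum_subtractf)
qed

lemma ZN_eq:
  assumes pos: "\<And>k. k < n \<Longrightarrow> 0 < t - 1 + KN_eigenvalue \<mu> N (Suc k)"
  shows "ZN \<mu> N A t = sqrt ((2 * pi * real N)^n / (\<Prod>k<n. t - 1 + KN_eigenvalue \<mu> N (Suc k)))"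
proof -
  define d where "d k = (t - 1 + KN_eigenvalue \<mu> N (Suc k)) / real N" for k
  have integrand: "exp (- (t * P2 N A y + Qf \<mu> N A y) / (2 * real N)) = exp (- quad_form n (conj_diag n W d) y / 2)" for y
    using N_pos by (simp add: exponent_diagonal quad_form_conj_diag d_def sum_divide_distrib mult.commute)
  have "N - 1 = n" using N_eq by simp
  then have "ZN \<mu> N A t = (\<integral>y. exp (- quad_form n (conj_diag n W d) y / 2) \<partial>PiM {..<n} (\<lambda>_. lborel))"
    unfolding ZN_def integrand by simp
  also have "\<dots> = sqrt ((2 * pi)^n / mat_det n (conj_diag n W d))"
    using N_pos pos by (intro integral_gaussian_quad_form pos_def_conj_diag) (simp add: d_def)
  also have "mat_det n (conj_diag n W d) = (\<Prod>k<n. t - 1 + KN_eigenvalue \<mu> N (Suc k)) / real N ^ n"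
    by (simp add: mat_det_conj_diag d_def prod_dividef)
  finally show ?thesis
    using N_pos by (simp add: power_mult_distrib)
qed

end

section \<open>Bounds on the eigenvalues of K_N\<close>

lemma sin_ge_x_cos:
  assumes "0 \<le> x" "x \<le> pi"
  shows "x * cos x \<le> sin x"
proof -
  let ?f = "\<lambda>x. sin x - x * cos x"
  have "?f 0 \<le> ?f x"
  proof (rule DERIV_nonneg_imp_nondecreasing[OF assms(1)])
    fix u assume u: "0 \<le> u" "u \<le> x"
    have "(?f has_real_derivative u * sin u) (at u)"
      by (auto intro!: derivative_eq_intros simp: algebra_simps)
    moreover have "0 \<le> u * sin u" using u assms by (intro mult_nonneg_nonneg sin_ge_zero) auto
    ultimately show "\<exists>y. (?f has_real_derivative y) (at u) \<and> 0 \<le> y" by blast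
  qed
  then show ?thesis by simp
qed

lemma sin_ge_half:
  assumes "0 \<le> x" "x \<le> pi / 2"
  shows "x / 2 \<le> sin x"
proof -
  have "cos (pi / 4) \<le> cos (x / 2)"
    using assms by (intro cos_monotone_0_pi_le) auto
  then have cos_sq: "1 / 2 \<le> (cos (x / 2))^2"
    using power_mono[of "cos (pi / 4)" "cos (x / 2)" 2] by (simp add: cos_45 power_divide)
  have cos_nonneg: "0 \<le> cos (x / 2)"
    using assms by (intro cos_ge_zero) auto
  have "x / 2 = x * (1 / 2)" by simp
  also have "\<dots> \<le> x * (cos (x / 2))^2"
    using cos_sq assms(1) by (rule mult_left_mono)
  also have "\<dots> = 2 * (x / 2 * cos (x / 2)) * cos (x / 2)"
    by (simp add: power2_eq_square)
  also have "\<dots> \<le> 2 * sin (x / 2) * cos (x / 2)"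
    using sin_ge_x_cos[of "x / 2"] cos_nonneg assms by (intro mult_right_mono) auto
  also have "\<dots> = sin x"
    using sin_double[of "x / 2"] by simp
  finally show ?thesis .
qed

lemma sum_inverse_squares_le: "(\<Sum>k<M. 1 / (real k + 1)^2) \<le> 2"
proof -
  have bound: "(\<Sum>k<Suc M. 1 / (real k + 1)^2) \<le> 2 - 1 / (real M + 1)" for M
  proof (induction M)
    case (Suc M)
    have "1 / (real M + 2)^2 \<le> 1 / ((real M + 1) * (real M + 2))"
      by (rule frac_le) (auto simp: power2_eq_square intro!: mult_right_mono)
    also have "\<dots> = 1 / (real M + 1) - 1 / (real M + 2)"
      by (simp add: field_simps)
    finally show ?case using Suc by (simp add: add.commute)
  qed simp
  show ?thesis
  proof (cases M)
    case (Suc M')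
    have "0 \<le> 1 / (real M' + 1)" by simp
    then show ?thesis using bound[of M'] unfolding Suc by linarith
  qed simp
qed

lemma KN_eigenvalue_reflect:
  assumes "m \<le> N"
  shows "KN_eigenvalue \<mu> N (N - m) = KN_eigenvalue \<mu> N m"
proof (cases "N = 0")
  case False
  then have "pi * real (N - m) / real N = pi - pi * real m / real N"
    using assms by (simp add: of_nat_diff field_simps)
  then show ?thesis by (simp add: KN_eigenvalue_def)
qed (use assms in simp)

lemma
  assumes p: "1 \<le> p" "2 * p \<le> N" and \<mu>: "0 < \<mu>"
  shows KN_eigenvalue_ge_lower_half: "\<mu> \<le> KN_eigenvalue \<mu> N p"
    and inverse_KN_eigenvalue_le_lower_half: "1 / KN_eigenvalue \<mu> N p \<le> 4 / (\<mu> * (real p)^2)"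
proof -
  have N: "2 \<le> real N" using p by linarith
  define x where "x = pi * real p / real N"
  have "pi * 1 \<le> pi * real p"
    using p by (intro mult_left_mono) auto
  then have x_lower: "pi / real N \<le> x"
    unfolding x_def using N by (intro divide_right_mono) auto
  have "pi * (2 * real p) \<le> pi * real N"
    using p by (intro mult_left_mono) auto
  then have x_upper: "x \<le> pi / 2"
    using N by (simp add: x_def field_simps)
  have "pi / real N < pi"
    using N by (simp add: divide_less_eq)
  then have s1: "0 < sin (pi / real N)"
    using N by (intro sin_gt_zero) auto
  have "sin (pi / real N) \<le> sin x"
    using x_lower x_upper N by (intro sin_monotone_2pi_le) (auto intro: order.trans[of _ 0])
  then have "(sin (pi / real N))^2 \<le> (sin x)^2"
    using s1 by (intro power_mono) auto
  then show "\<mu> \<le> KN_eigenvalue \<mu> N p"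
    using s1 \<mu> by (simp add: KN_eigenvalue_def x_def[symmetric] le_divide_eq)
  have "0 < pi / real N"
    using N by simp
  then have x_pos: "0 < x"
    using x_lower by linarith
  have "1 / KN_eigenvalue \<mu> N p = (sin (pi / real N))^2 / (\<mu> * (sin x)^2)"
    by (simp add: KN_eigenvalue_def x_def)
  also have "\<dots> \<le> (pi / real N)^2 / (\<mu> * (x / 2)^2)"
  proof (rule frac_le)
    show "(sin (pi / real N))^2 \<le> (pi / real N)^2"
      using s1 sin_x_le_x[of "pi / real N"] N by (intro power_mono) auto
    show "\<mu> * (x / 2)^2 \<le> \<mu> * (sin x)^2"
      using sin_ge_half[of x] x_pos x_upper \<mu> by (intro mult_left_mono power_mono) auto
  qed (use x_pos \<mu> in auto)
  also have "\<dots> = 4 / (\<mu> * (real p)^2)"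
    using N p by (simp add: x_def field_simps power2_eq_square)
  finally show "1 / KN_eigenvalue \<mu> N p \<le> 4 / (\<mu> * (real p)^2)" .
qed

lemma KN_eigenvalue_ge:
  assumes "0 < m" "m < N" "0 < \<mu>"
  shows "\<mu> \<le> KN_eigenvalue \<mu> N m"
proof (cases "2 * m \<le> N")
  case True
  then show ?thesis using assms by (intro KN_eigenvalue_ge_lower_half) auto
next
  case False
  then show ?thesis
    using assms KN_eigenvalue_ge_lower_half[of "N - m" N \<mu>] KN_eigenvalue_reflect[of m N \<mu>] by auto
qed

lemma inverse_KN_eigenvalue_le:
  assumes "0 < m" "m < N" "0 < \<mu>"
  shows "1 / KN_eigenvalue \<mu> N m \<le> 4 / \<mu> * (1 / (real m)^2 + 1 / (real (N - m))^2)"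
proof (cases "2 * m \<le> N")
  case True
  then have "1 / KN_eigenvalue \<mu> N m \<le> 4 / \<mu> * (1 / (real m)^2)"
    using assms inverse_KN_eigenvalue_le_lower_half[of m N \<mu>] by simp
  also have "\<dots> \<le> 4 / \<mu> * (1 / (real m)^2 + 1 / (real (N - m))^2)"
    using assms by (intro mult_left_mono) auto
  finally show ?thesis .
next
  case False
  then have "1 / KN_eigenvalue \<mu> N m \<le> 4 / \<mu> * (1 / (real (N - m))^2)"
    using assms inverse_KN_eigenvalue_le_lower_half[of "N - m" N \<mu>] KN_eigenvalue_reflect[of m N \<mu>]
    by simp
  also have "\<dots> \<le> 4 / \<mu> * (1 / (real m)^2 + 1 / (real (N - m))^2)"
    using assms by (intro mult_left_mono) auto
  finally show ?thesis .
qed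

lemma sum_inverse_KN_eigenvalues_le:
  assumes "0 < \<mu>"
  shows "(\<Sum>k<n. 1 / KN_eigenvalue \<mu> (Suc n) (Suc k)) \<le> 16 / \<mu>"
proof -
  have "(\<Sum>k<n. 1 / KN_eigenvalue \<mu> (Suc n) (Suc k))
      \<le> (\<Sum>k<n. 4 / \<mu> * (1 / (real k + 1)^2 + 1 / (real (n - Suc k) + 1)^2))"
  proof (rule sum_mono)
    fix k assume "k \<in> {..<n}"
    then have "Suc n - Suc k = Suc (n - Suc k)" by auto
    then show "1 / KN_eigenvalue \<mu> (Suc n) (Suc k)
        \<le> 4 / \<mu> * (1 / (real k + 1)^2 + 1 / (real (n - Suc k) + 1)^2)"
      using inverse_KN_eigenvalue_le[of "Suc k" "Suc n" \<mu>] \<open>k \<in> {..<n}\<close> assms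
      by (simp add: add.commute)
  qed
  also have "\<dots> = 4 / \<mu> * ((\<Sum>k<n. 1 / (real k + 1)^2) + (\<Sum>k<n. 1 / (real (n - Suc k) + 1)^2))"
    by (simp only: distrib_left sum.distrib sum_distrib_left)
  also have "(\<Sum>k<n. 1 / (real (n - Suc k) + 1)^2) = (\<Sum>k<n. 1 / (real k + 1)^2)"
    by (rule sum.nat_diff_reindex)
  also have "4 / \<mu> * ((\<Sum>k<n. 1 / (real k + 1)^2) + (\<Sum>k<n. 1 / (real k + 1)^2)) \<le> 4 / \<mu> * (2 + 2)"
    using sum_inverse_squares_le[of n] assms by (intro mult_left_mono add_mono) auto
  finally show ?thesis by simp
qed

lemma exp_neg_le_ratio:
  fixes \<alpha> \<beta> :: real
  assumes "0 < \<alpha>" "0 < \<beta>"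
  shows "exp (- \<bar>\<beta> - \<alpha>\<bar> / \<alpha>) \<le> \<alpha> / \<beta>"
proof -
  have "\<beta> / \<alpha> = 1 + (\<beta> - \<alpha>) / \<alpha>"
    using assms by (simp add: field_simps)
  also have "\<dots> \<le> 1 + \<bar>\<beta> - \<alpha>\<bar> / \<alpha>"
    using assms by (simp add: divide_right_mono)
  also have "\<dots> \<le> exp (\<bar>\<beta> - \<alpha>\<bar> / \<alpha>)"
    by (rule exp_ge_add_one_self)
  finally show ?thesis
    using assms by (simp add: exp_minus field_simps)
qed

lemma prod_ratio_ge_exp:
  fixes \<alpha> \<beta> :: "'a \<Rightarrow> real"
  assumes "finite K" and "\<And>k. k \<in> K \<Longrightarrow> 0 < \<alpha> k \<and> 0 < \<beta> k \<and> \<beta> k - \<alpha> k = s"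
  shows "exp (- \<bar>s\<bar> * (\<Sum>k\<in>K. 1 / \<alpha> k)) \<le> (\<Prod>k\<in>K. \<alpha> k / \<beta> k)"
proof -
  have "exp (- \<bar>s\<bar> * (\<Sum>k\<in>K. 1 / \<alpha> k)) = (\<Prod>k\<in>K. exp (- \<bar>\<beta> k - \<alpha> k\<bar> / \<alpha> k))"
    using assms by (simp add: exp_sum sum_distrib_left divide_inverse)
  also have "\<dots> \<le> (\<Prod>k\<in>K. \<alpha> k / \<beta> k)"
    using assms by (intro prod_mono conjI exp_neg_le_ratio) auto
  finally show ?thesis .
qed

lemma inverse_shift_le:
  fixes \<mu> l c :: real
  assumes "0 < \<mu>" "\<mu> \<le> l" "0 < c + \<mu>"
  shows "1 / (c + l) \<le> 1 / (min 1 ((c + \<mu>) / \<mu>) * l)"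
proof (rule frac_le)
  show "min 1 ((c + \<mu>) / \<mu>) * l \<le> c + l"
  proof (cases "0 \<le> c")
    case True
    then show ?thesis using assms by (simp add: min_def)
  next
    case False
    then have "(c + \<mu>) / \<mu> * l \<le> c + l"
      using assms by (simp add: field_simps mult_left_mono_neg)
    then show ?thesis using assms by (simp add: min_def mult_right_mono)
  qed
qed (use assms in auto)

lemma (in sum_zero_onb) ZN_ratio:
  assumes "\<And>k. k < n \<Longrightarrow> 0 < t - 1 + KN_eigenvalue \<mu> N (Suc k)"
    and "\<And>k. k < n \<Longrightarrow> 0 < t0 - 1 + KN_eigenvalue \<mu> N (Suc k)"
  shows "ZN \<mu> N A t / ZN \<mu> N A t0
    = sqrt (\<Prod>k<n. (t0 - 1 + KN_eigenvalue \<mu> N (Suc k)) / (t - 1 + KN_eigenvalue \<mu> N (Suc k)))"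
proof -
  have "0 < (\<Prod>k<n. t - 1 + KN_eigenvalue \<mu> N (Suc k))" "0 < (\<Prod>k<n. t0 - 1 + KN_eigenvalue \<mu> N (Suc k))"
    using assms by (auto intro!: prod_pos)
  moreover have "0 < (2 * pi * real N)^n"
    using N_pos by simp
  ultimately show ?thesis
    using assms N_pos by (simp add: ZN_eq prod_dividef real_sqrt_divide field_simps)
qed

theorem lemma5p5:
  fixes \<mu> t0 :: real
  assumes "\<mu> > 1" and "t0 > - (\<mu> - 1)"
  shows "\<exists>\<gamma> > 0. \<forall>N :: nat. \<forall>A t. 0 < N \<longrightarrow> onb_sum_zero N A \<longrightarrow> t > - (\<mu> - 1) \<longrightarrow>
           ZN \<mu> N A t / ZN \<mu> N A t0 \<ge> exp (- \<gamma> * \<bar>t - t0\<bar> / 2)"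
proof -
  define \<kappa> where "\<kappa> = min 1 ((t0 - 1 + \<mu>) / \<mu>)"
  define \<gamma> where "\<gamma> = 16 / (\<mu> * \<kappa>)"
  have \<kappa>: "0 < \<kappa>" using assms by (simp add: \<kappa>_def)
  have "exp (- \<gamma> * \<bar>t - t0\<bar> / 2) \<le> ZN \<mu> N A t / ZN \<mu> N A t0"
    if N: "0 < N" and A: "onb_sum_zero N A" and t: "t > - (\<mu> - 1)" for N A t
  proof -
    interpret sum_zero_onb N A "N - 1" using N A by unfold_locales auto
    let ?ev = "\<lambda>k. KN_eigenvalue \<mu> N (Suc k)"
    have ev: "\<mu> \<le> ?ev k" if "k < N - 1" for k
      using that assms by (intro KN_eigenvalue_ge) auto
    have pos_t0: "0 < t0 - 1 + ?ev k" and pos_t: "0 < t - 1 + ?ev k" if "k < N - 1" for k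
      using ev[OF that] assms t by auto
    have "(\<Sum>k<N - 1. 1 / (t0 - 1 + ?ev k)) \<le> (\<Sum>k<N - 1. 1 / \<kappa> * (1 / ?ev k))"
      using ev assms unfolding \<kappa>_def by (intro sum_mono) (simp add: inverse_shift_le)
    also have "\<dots> = 1 / \<kappa> * (\<Sum>k<N - 1. 1 / ?ev k)"
      by (simp add: sum_distrib_left)
    also have "\<dots> \<le> 1 / \<kappa> * (16 / \<mu>)"
      using sum_inverse_KN_eigenvalues_le[of \<mu> "N - 1", folded N_eq] \<kappa> assms
      by (intro mult_left_mono) auto
    finally have sum_le: "(\<Sum>k<N - 1. 1 / (t0 - 1 + ?ev k)) \<le> \<gamma>"
      by (simp add: \<gamma>_def mult.commute)
    have "exp (- \<bar>t - t0\<bar> * \<gamma>) = (exp (- \<gamma> * \<bar>t - t0\<bar> / 2))^2"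
      by (simp add: power2_eq_square flip: exp_add)
    then have "exp (- \<gamma> * \<bar>t - t0\<bar> / 2) = sqrt (exp (- \<bar>t - t0\<bar> * \<gamma>))"
      by simp
    also have "\<dots> \<le> sqrt (exp (- \<bar>t - t0\<bar> * (\<Sum>k<N - 1. 1 / (t0 - 1 + ?ev k))))"
      using sum_le by (simp add: mult_left_mono)
    also have "\<dots> \<le> sqrt (\<Prod>k<N - 1. (t0 - 1 + ?ev k) / (t - 1 + ?ev k))"
      using pos_t0 pos_t by (intro real_sqrt_le_mono prod_ratio_ge_exp) auto
    also have "\<dots> = ZN \<mu> N A t / ZN \<mu> N A t0"
      using pos_t0 pos_t by (intro ZN_ratio[symmetric]) auto
    finally show ?thesis .
  qed
  moreover have "0 < \<gamma>" using \<kappa> assms by (simp add: \<gamma>_def)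
  ultimately show ?thesis by blast
qed

end
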